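(* Let $a_0,a_1,a_2,a_3\in\mathbb{R}$ and consider the monic binary quartic form $$f(x,y)=x^4+a_3x^3y+a_2x^2y^2+a_1xy^3+a_0y^4 .$$ Let $$b_0=\tfrac14\,(-a_1^2+a_1a_2a_3-a_0a_3^2),\quad b_1=\tfrac14\,(4a_0-a_2^2-a_1a_3),\quad b_2=\tfrac{a_2}{2},\quad \lambda_0=\frac{4b_2+2\sqrt{3b_1+4b_2^2}}{3}.$$ Then $f$ is positive semi-definite if and only if $\lambda_0$ is real and $$\lambda_0\ge \frac{a_3^2}{4},\qquad -\tfrac14\lambda_0^3+b_2\lambda_0^2+b_1\lambda_0+b_0\ge 0 .$$ Moreover, $f$ is positive definite if and only if $\lambda_0$ is real and $$\lambda_0> \frac{a_3^2}{4},\qquad -\tfrac14\lambda_0^3+b_2\lambda_0^2+b_1\lambda_0+b_0> 0 .$$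
   Context: A binary form $f(x,y)$ with real coefficients is positive definite (resp. positive semi-definite) if $f(x,y)>0$ (resp. $f(x,y)\ge 0$) for all real $x,y$ not both zero. The quantity $\lambda_0$ is real exactly when $3b_1+4b_2^2\ge 0$. *)

theory Defs
  imports Complex_Main
begin

definition quartic_form :: "real \<Rightarrow> real \<Rightarrow> real \<Rightarrow> real \<Rightarrow> real \<Rightarrow> real \<Rightarrow> real" where
  "quartic_form a0 a1 a2 a3 x y =
     x^4 + a3 * x^3 * y + a2 * x^2 * y^2 + a1 * x * y^3 + a0 * y^4"

definition pos_semidef_form :: "(real \<Rightarrow> real \<Rightarrow> real) \<Rightarrow> bool" where
  "pos_semidef_form f \<longleftrightarrow> (\<forall>x y. (x \<noteq> 0 \<or> y \<noteq> 0) \<longrightarrow> f x y \<ge> 0)"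

definition pos_def_form :: "(real \<Rightarrow> real \<Rightarrow> real) \<Rightarrow> bool" where
  "pos_def_form f \<longleftrightarrow> (\<forall>x y. (x \<noteq> 0 \<or> y \<noteq> 0) \<longrightarrow> f x y > 0)"

end

theory Submission
  imports Defs
begin

(* Ferrari's method. Subtracting (x^2 + a3 x / 2 + (a2 - l) / 2)^2 from p(x) = f(x, 1) leaves a
   quadratic with leading coefficient l - a3^2/4 and discriminant -4 g(l), where g is the resolvent
   cubic -l^3/4 + b2 l^2 + b1 l + b0. At the larger critical point lam0 of g the hypotheses make
   this quadratic nonnegative (positive), hence also p.
   Conversely, let x0 be a global minimum of p and l = a2 + a3 x0 + 2 x0^2. Then l >= a3^2/4,
   g'(l) = p(x0) and g(l) = (l - a3^2/4) p(x0). So g'(l) >= 0 puts l between the critical points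
   of g, where g increases; hence lam0 >= l >= a3^2/4 and g(lam0) >= g(l) >= 0, strictly if
   p(x0) > 0. *)

definition resolvent :: "real \<Rightarrow> real \<Rightarrow> real \<Rightarrow> real \<Rightarrow> real" where
  "resolvent b0 b1 b2 l = - (1/4) * l^3 + b2 * l^2 + b1 * l + b0"

definition resolvent_deriv :: "real \<Rightarrow> real \<Rightarrow> real \<Rightarrow> real" where
  "resolvent_deriv b1 b2 l = - (3/4) * l^2 + 2 * b2 * l + b1"

(* The larger critical point of resolvent, provided 3 b1 + 4 b2^2 >= 0. *)
definition resolvent_crit :: "real \<Rightarrow> real \<Rightarrow> real" where
  "resolvent_crit b1 b2 = (4 * b2 + 2 * sqrt (3 * b1 + 4 * b2^2)) / 3"

lemma resolvent_deriv_completed_square: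
  "resolvent_deriv b1 b2 l = (3 * b1 + 4 * b2^2) / 3 - (3 * l - 4 * b2)^2 / 12"
  unfolding resolvent_deriv_def by (simp add: algebra_simps power2_eq_square divide_simps)

lemma resolvent_deriv_crit:
  assumes "0 \<le> 3 * b1 + 4 * b2^2"
  shows "resolvent_deriv b1 b2 (resolvent_crit b1 b2) = 0"
proof -
  have "3 * resolvent_crit b1 b2 - 4 * b2 = 2 * sqrt (3 * b1 + 4 * b2^2)"
    by (simp add: resolvent_crit_def field_simps)
  then have "(3 * resolvent_crit b1 b2 - 4 * b2)^2 = 4 * (3 * b1 + 4 * b2^2)"
    using assms by (simp add: power_mult_distrib)
  then show ?thesis by (simp add: resolvent_deriv_completed_square)
qed

lemma resolvent_crit_minus_resolvent:
  assumes "0 \<le> 3 * b1 + 4 * b2^2"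
  shows "resolvent b0 b1 b2 (resolvent_crit b1 b2) - resolvent b0 b1 b2 l =
    (l - resolvent_crit b1 b2)^2 * (3 * l - 4 * b2 + 4 * sqrt (3 * b1 + 4 * b2^2)) / 12"
proof -
  define s where "s = sqrt (3 * b1 + 4 * b2^2)"
  have b1: "b1 = (s^2 - 4 * b2^2) / 3" using assms by (simp add: s_def)
  show ?thesis
    unfolding resolvent_def resolvent_crit_def s_def[symmetric] b1
    by (simp add: algebra_simps power2_eq_square power3_eq_cube divide_simps)
qed

lemma resolvent_le_resolvent_crit:
  assumes "0 \<le> resolvent_deriv b1 b2 l"
  shows "0 \<le> 3 * b1 + 4 * b2^2" and "l \<le> resolvent_crit b1 b2"
    and "resolvent b0 b1 b2 l \<le> resolvent b0 b1 b2 (resolvent_crit b1 b2)"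
proof -
  define s where "s = sqrt (3 * b1 + 4 * b2^2)"
  have sq: "(3 * l - 4 * b2)^2 \<le> 4 * (3 * b1 + 4 * b2^2)"
    using assms by (simp add: resolvent_deriv_completed_square)
  then show disc: "0 \<le> 3 * b1 + 4 * b2^2"
    using order_trans[OF zero_le_power2 sq] by simp
  have "\<bar>3 * l - 4 * b2\<bar>^2 \<le> (2 * s)^2" "0 \<le> 2 * s"
    using sq disc by (simp_all add: s_def power_mult_distrib)
  then have "\<bar>3 * l - 4 * b2\<bar> \<le> 2 * s"
    by (rule power2_le_imp_le)
  then show "l \<le> resolvent_crit b1 b2"
    by (simp add: resolvent_crit_def s_def)
  have "0 \<le> (l - resolvent_crit b1 b2)^2 * (3 * l - 4 * b2 + 4 * s) / 12"
    using \<open>\<bar>3 * l - 4 * b2\<bar> \<le> 2 * s\<close> by simp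
  then show "resolvent b0 b1 b2 l \<le> resolvent b0 b1 b2 (resolvent_crit b1 b2)"
    using resolvent_crit_minus_resolvent[OF disc, of b0 l] by (simp add: s_def)
qed

lemma resolvent_less_resolvent_crit:
  assumes "0 < resolvent_deriv b1 b2 l"
  shows "l < resolvent_crit b1 b2"
    and "resolvent b0 b1 b2 l < resolvent b0 b1 b2 (resolvent_crit b1 b2)"
proof -
  define s where "s = sqrt (3 * b1 + 4 * b2^2)"
  have sq: "(3 * l - 4 * b2)^2 < 4 * (3 * b1 + 4 * b2^2)"
    using assms by (simp add: resolvent_deriv_completed_square)
  then have disc: "0 \<le> 3 * b1 + 4 * b2^2"
    using order_trans[OF zero_le_power2 less_imp_le[OF sq]] by simp
  have "\<bar>3 * l - 4 * b2\<bar>^2 < (2 * s)^2" "0 \<le> 2 * s"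
    using sq disc by (simp_all add: s_def power_mult_distrib)
  then have abs_less: "\<bar>3 * l - 4 * b2\<bar> < 2 * s"
    by (rule power2_less_imp_less)
  then show less: "l < resolvent_crit b1 b2"
    by (simp add: resolvent_crit_def s_def)
  have "0 < (l - resolvent_crit b1 b2)^2 * (3 * l - 4 * b2 + 4 * s) / 12"
    using abs_less less by simp
  then show "resolvent b0 b1 b2 l < resolvent b0 b1 b2 (resolvent_crit b1 b2)"
    using resolvent_crit_minus_resolvent[OF disc, of b0 l] by (simp add: s_def)
qed

lemma quadratic_nonneg:
  fixes A B C x :: real
  assumes "0 \<le> A" and "B^2 \<le> 4 * A * C" and "A = 0 \<Longrightarrow> 0 \<le> C"
  shows "0 \<le> A * x^2 + B * x + C"
proof (cases "A = 0")
  case True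
  then show ?thesis using assms by simp
next
  case False
  have "4 * A * (A * x^2 + B * x + C) = (2 * A * x + B)^2 + (4 * A * C - B^2)"
    by (simp add: algebra_simps power2_eq_square)
  also have "\<dots> \<ge> 0" using assms by simp
  finally show ?thesis using assms False by (simp add: zero_le_mult_iff)
qed

lemma quadratic_pos:
  fixes A B C x :: real
  assumes "0 < A" and "B^2 < 4 * A * C"
  shows "0 < A * x^2 + B * x + C"
proof -
  have "4 * A * (A * x^2 + B * x + C) = (2 * A * x + B)^2 + (4 * A * C - B^2)"
    by (simp add: algebra_simps power2_eq_square)
  also have "\<dots> > 0" using assms by (simp add: add_nonneg_pos)
  finally show ?thesis using assms by (simp add: zero_less_mult_iff)
qed

definition quartic :: "real \<Rightarrow> real \<Rightarrow> real \<Rightarrow> real \<Rightarrow> real \<Rightarrow> real" where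
  "quartic a0 a1 a2 a3 x = x^4 + a3 * x^3 + a2 * x^2 + a1 * x + a0"

definition quartic_deriv :: "real \<Rightarrow> real \<Rightarrow> real \<Rightarrow> real \<Rightarrow> real" where
  "quartic_deriv a1 a2 a3 x = 4 * x^3 + 3 * a3 * x^2 + 2 * a2 * x + a1"

lemma has_real_derivative_quartic:
  "(quartic a0 a1 a2 a3 has_real_derivative quartic_deriv a1 a2 a3 x) (at x)"
  unfolding quartic_def quartic_deriv_def
  by (rule derivative_eq_intros refl | simp)+

lemma quartic_form_eq_quartic:
  "y \<noteq> 0 \<Longrightarrow> quartic_form a0 a1 a2 a3 x y = y^4 * quartic a0 a1 a2 a3 (x / y)"
  unfolding quartic_form_def quartic_def
  by (simp add: field_simps power2_eq_square power3_eq_cube power4_eq_xxxx)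

lemma pos_semidef_form_quartic_iff:
  "pos_semidef_form (quartic_form a0 a1 a2 a3) \<longleftrightarrow> (\<forall>x. 0 \<le> quartic a0 a1 a2 a3 x)"
  unfolding pos_semidef_form_def
proof (intro iffI allI impI)
  fix x
  assume "\<forall>x y. x \<noteq> 0 \<or> y \<noteq> 0 \<longrightarrow> 0 \<le> quartic_form a0 a1 a2 a3 x y"
  from this[rule_format, of x 1] show "0 \<le> quartic a0 a1 a2 a3 x"
    using quartic_form_eq_quartic[of 1 a0 a1 a2 a3 x] by simp
next
  fix x y :: real
  assume "\<forall>x. 0 \<le> quartic a0 a1 a2 a3 x"
  then show "0 \<le> quartic_form a0 a1 a2 a3 x y"
    using quartic_form_eq_quartic[of y a0 a1 a2 a3 x]
    by (cases "y = 0") (auto simp: quartic_form_def)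
qed

lemma pos_def_form_quartic_iff:
  "pos_def_form (quartic_form a0 a1 a2 a3) \<longleftrightarrow> (\<forall>x. 0 < quartic a0 a1 a2 a3 x)"
  unfolding pos_def_form_def
proof (intro iffI allI impI)
  fix x
  assume "\<forall>x y. x \<noteq> 0 \<or> y \<noteq> 0 \<longrightarrow> 0 < quartic_form a0 a1 a2 a3 x y"
  from this[rule_format, of x 1] show "0 < quartic a0 a1 a2 a3 x"
    using quartic_form_eq_quartic[of 1 a0 a1 a2 a3 x] by simp
next
  fix x y :: real
  assume "\<forall>x. 0 < quartic a0 a1 a2 a3 x" and "x \<noteq> 0 \<or> y \<noteq> 0"
  then show "0 < quartic_form a0 a1 a2 a3 x y"
    using quartic_form_eq_quartic[of y a0 a1 a2 a3 x]
    by (cases "y = 0") (auto simp: quartic_form_def)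
qed

lemma abs_lower_terms_less_power4:
  fixes a1 a2 a3 x :: real
  assumes "\<bar>a1\<bar> + \<bar>a2\<bar> + \<bar>a3\<bar> + 1 \<le> \<bar>x\<bar>"
  shows "\<bar>a3 * x^3 + a2 * x^2 + a1 * x\<bar> < x^4"
proof -
  have x1: "1 \<le> \<bar>x\<bar>" using assms by linarith
  have "\<bar>a3 * x^3 + a2 * x^2 + a1 * x\<bar> \<le> \<bar>a3 * x^3\<bar> + \<bar>a2 * x^2\<bar> + \<bar>a1 * x\<bar>"
    by (rule order_trans[OF abs_triangle_ineq add_right_mono[OF abs_triangle_ineq]])
  also have "\<dots> = \<bar>a3\<bar> * \<bar>x\<bar>^3 + \<bar>a2\<bar> * \<bar>x\<bar>^2 + \<bar>a1\<bar> * \<bar>x\<bar>"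
    by (simp add: abs_mult power_abs)
  also have "\<dots> \<le> \<bar>a3\<bar> * \<bar>x\<bar>^3 + \<bar>a2\<bar> * \<bar>x\<bar>^3 + \<bar>a1\<bar> * \<bar>x\<bar>^3"
    using power_increasing[OF _ x1, of 2 3] power_increasing[OF _ x1, of 1 3]
    by (intro add_mono mult_left_mono) simp_all
  also have "\<dots> = (\<bar>a3\<bar> + \<bar>a2\<bar> + \<bar>a1\<bar>) * \<bar>x\<bar>^3"
    by (simp add: distrib_right)
  also have "\<dots> < \<bar>x\<bar> * \<bar>x\<bar>^3"
    using assms x1 by (intro mult_strict_right_mono) auto
  finally show ?thesis by (simp add: power_abs power4_eq_xxxx power3_eq_cube)
qed

lemma quartic_attains_min: "\<exists>x0. \<forall>x. quartic a0 a1 a2 a3 x0 \<le> quartic a0 a1 a2 a3 x"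
proof -
  define R where "R = \<bar>a1\<bar> + \<bar>a2\<bar> + \<bar>a3\<bar> + 1"
  have "0 \<le> R" by (simp add: R_def)
  have cont: "continuous_on {-R..R} (quartic a0 a1 a2 a3)"
    unfolding quartic_def by (intro continuous_intros)
  obtain x0 where x0: "\<forall>y\<in>{-R..R}. quartic a0 a1 a2 a3 x0 \<le> quartic a0 a1 a2 a3 y"
    using continuous_attains_inf[OF compact_Icc _ cont] \<open>0 \<le> R\<close> by auto
  have "quartic a0 a1 a2 a3 x0 \<le> quartic a0 a1 a2 a3 x" for x
  proof (cases "\<bar>x\<bar> \<le> R")
    case True
    then have "x \<in> {-R..R}" by (simp add: abs_le_iff)
    then show ?thesis using x0 by blast
  next
    case False
    then have "\<bar>a3 * x^3 + a2 * x^2 + a1 * x\<bar> < x^4"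
      by (intro abs_lower_terms_less_power4) (simp add: R_def)
    then have "a0 < quartic a0 a1 a2 a3 x"
      using abs_ge_minus_self[of "a3 * x^3 + a2 * x^2 + a1 * x"] by (simp add: quartic_def)
    moreover have "quartic a0 a1 a2 a3 x0 \<le> quartic a0 a1 a2 a3 0"
      using x0 \<open>0 \<le> R\<close> by simp
    moreover have "quartic a0 a1 a2 a3 0 = a0" by (simp add: quartic_def)
    ultimately show ?thesis by linarith
  qed
  then show ?thesis by blast
qed

lemma quartic_ferrari_split:
  "quartic a0 a1 a2 a3 x = (x^2 + a3 / 2 * x + (a2 - l) / 2)^2
     + ((l - a3^2 / 4) * x^2 + (a1 - a3 * (a2 - l) / 2) * x + (a0 - ((a2 - l) / 2)^2))"
  unfolding quartic_def
  by (simp add: algebra_simps power2_eq_square power3_eq_cube power4_eq_xxxx divide_simps)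

lemma quartic_tangent_remainder:
  "quartic a0 a1 a2 a3 x - quartic a0 a1 a2 a3 x0 - quartic_deriv a1 a2 a3 x0 * (x - x0) =
     (x - x0)^2 * ((x + x0 + a3 / 2)^2 + (a2 + a3 * x0 + 2 * x0^2 - a3^2 / 4))"
  unfolding quartic_def quartic_deriv_def
  by (simp add: algebra_simps power2_eq_square power3_eq_cube power4_eq_xxxx divide_simps)

lemma quartic_global_min:
  assumes min: "\<forall>x. quartic a0 a1 a2 a3 x0 \<le> quartic a0 a1 a2 a3 x"
  shows "quartic_deriv a1 a2 a3 x0 = 0" and "a3^2 / 4 \<le> a2 + a3 * x0 + 2 * x0^2"
proof -
  show deriv0: "quartic_deriv a1 a2 a3 x0 = 0"
    by (rule DERIV_local_min[OF has_real_derivative_quartic, of 1]) (use min in auto)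
  define c where "c = a2 + a3 * x0 + 2 * x0^2 - a3^2 / 4"
  have "0 \<le> (x + x0 + a3 / 2)^2 + c" if "x \<noteq> x0" for x
  proof -
    have "0 \<le> quartic a0 a1 a2 a3 x - quartic a0 a1 a2 a3 x0" using min by simp
    also have "\<dots> = (x - x0)^2 * ((x + x0 + a3 / 2)^2 + c)"
      using quartic_tangent_remainder[of a0 a1 a2 a3 x x0] deriv0 by (simp add: c_def)
    finally have "0 \<le> (x - x0)^2 * ((x + x0 + a3 / 2)^2 + c)" .
    then show ?thesis using that by (simp add: zero_le_mult_iff)
  qed
  then have "eventually (\<lambda>x. 0 \<le> (x + x0 + a3 / 2)^2 + c) (at (- x0 - a3 / 2))"
    using eventually_neq_at_within[of x0] by (rule eventually_mono[rotated]) blast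
  moreover have "((\<lambda>x. (x + x0 + a3 / 2)^2 + c) \<longlongrightarrow> c) (at (- x0 - a3 / 2))"
    by (auto intro!: tendsto_eq_intros)
  ultimately have "0 \<le> c"
    using tendsto_lowerbound[OF _ _ at_neq_bot] by blast
  then show "a3^2 / 4 \<le> a2 + a3 * x0 + 2 * x0^2" by (simp add: c_def)
qed

locale ferrari_resolvent =
  fixes a0 a1 a2 a3 b0 b1 b2 :: real
  assumes b0_eq: "b0 = (- (a1^2) + a1 * a2 * a3 - a0 * a3^2) / 4"
    and b1_eq: "b1 = (4 * a0 - a2^2 - a1 * a3) / 4"
    and b2_eq: "b2 = a2 / 2"
begin

lemma resolvent_eq_discriminant:
  "4 * resolvent b0 b1 b2 l =
     4 * (l - a3^2 / 4) * (a0 - ((a2 - l) / 2)^2) - (a1 - a3 * (a2 - l) / 2)^2"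
  unfolding resolvent_def b0_eq b1_eq b2_eq
  by (simp add: algebra_simps power2_eq_square power3_eq_cube divide_simps)

lemma resolvent_deriv_eq:
  "4 * resolvent_deriv b1 b2 l =
     4 * (a0 - ((a2 - l) / 2)^2) + 2 * (l - a3^2 / 4) * (a2 - l) - a3 * (a1 - a3 * (a2 - l) / 2)"
  unfolding resolvent_deriv_def b1_eq b2_eq
  by (simp add: algebra_simps power2_eq_square divide_simps)

(* For l = a2 + a3 x0 + 2 x0^2 the square in quartic_ferrari_split is
   ((x - x0) (x + x0 + a3/2))^2, which vanishes at x0. *)
lemma resolvent_at_quartic_point:
  "resolvent b0 b1 b2 (a2 + a3 * x0 + 2 * x0^2) =
     (a2 + a3 * x0 + 2 * x0^2 - a3^2 / 4) * quartic a0 a1 a2 a3 x0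
     - (quartic_deriv a1 a2 a3 x0)^2 / 4"
  unfolding resolvent_def quartic_def quartic_deriv_def b0_eq b1_eq b2_eq
  by (simp add: algebra_simps power2_eq_square power3_eq_cube power4_eq_xxxx divide_simps)

lemma resolvent_deriv_at_quartic_point:
  "resolvent_deriv b1 b2 (a2 + a3 * x0 + 2 * x0^2) =
     quartic a0 a1 a2 a3 x0 - (4 * x0 + a3) * quartic_deriv a1 a2 a3 x0 / 4"
  unfolding resolvent_deriv_def quartic_def quartic_deriv_def b1_eq b2_eq
  by (simp add: algebra_simps power2_eq_square power3_eq_cube power4_eq_xxxx divide_simps)

lemma quartic_nonneg_if_resolvent_crit:
  assumes disc: "0 \<le> 3 * b1 + 4 * b2^2"
    and crit: "a3^2 / 4 \<le> resolvent_crit b1 b2"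
    and res: "0 \<le> resolvent b0 b1 b2 (resolvent_crit b1 b2)"
  shows "0 \<le> quartic a0 a1 a2 a3 x"
proof -
  define l where "l = resolvent_crit b1 b2"
  define A where "A = l - a3^2 / 4"
  define B where "B = a1 - a3 * (a2 - l) / 2"
  define C where "C = a0 - ((a2 - l) / 2)^2"
  have discr: "B^2 \<le> 4 * A * C"
    using resolvent_eq_discriminant[of l] res by (simp add: l_def A_def B_def C_def)
  have "0 \<le> C" if "A = 0"
  proof -
    have "B = 0" using discr that by simp
    moreover have "resolvent_deriv b1 b2 l = 0"
      unfolding l_def using disc by (rule resolvent_deriv_crit)
    moreover have "4 * resolvent_deriv b1 b2 l = 4 * C + 2 * A * (a2 - l) - a3 * B"
      using resolvent_deriv_eq[of l] by (simp add: A_def B_def C_def)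
    ultimately show ?thesis using that by simp
  qed
  then have "0 \<le> A * x^2 + B * x + C"
    using quadratic_nonneg discr crit by (simp add: A_def l_def)
  then show ?thesis
    unfolding quartic_ferrari_split[of a0 a1 a2 a3 x l] A_def B_def C_def
    by (rule add_nonneg_nonneg[OF zero_le_power2])
qed

lemma quartic_pos_if_resolvent_crit:
  assumes crit: "a3^2 / 4 < resolvent_crit b1 b2"
    and res: "0 < resolvent b0 b1 b2 (resolvent_crit b1 b2)"
  shows "0 < quartic a0 a1 a2 a3 x"
proof -
  define l where "l = resolvent_crit b1 b2"
  have "0 < (l - a3^2 / 4) * x^2 + (a1 - a3 * (a2 - l) / 2) * x + (a0 - ((a2 - l) / 2)^2)"
    using resolvent_eq_discriminant[of l] crit res by (intro quadratic_pos) (simp_all add: l_def)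
  then show ?thesis
    unfolding quartic_ferrari_split[of a0 a1 a2 a3 x l]
    by (rule add_nonneg_pos[OF zero_le_power2])
qed

lemma obtain_resolvent_point:
  obtains x0 l where "a3^2 / 4 \<le> l"
    and "resolvent_deriv b1 b2 l = quartic a0 a1 a2 a3 x0"
    and "resolvent b0 b1 b2 l = (l - a3^2 / 4) * quartic a0 a1 a2 a3 x0"
proof -
  obtain x0 where "\<forall>x. quartic a0 a1 a2 a3 x0 \<le> quartic a0 a1 a2 a3 x"
    using quartic_attains_min by blast
  note stationary = quartic_global_min[OF this]
  define l where "l = a2 + a3 * x0 + 2 * x0^2"
  show thesis
  proof
    show "a3^2 / 4 \<le> l"
      using stationary(2) by (simp add: l_def)
    show "resolvent_deriv b1 b2 l = quartic a0 a1 a2 a3 x0"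
      using resolvent_deriv_at_quartic_point[of x0, folded l_def] stationary(1) by simp
    show "resolvent b0 b1 b2 l = (l - a3^2 / 4) * quartic a0 a1 a2 a3 x0"
      using resolvent_at_quartic_point[of x0, folded l_def] stationary(1) by simp
  qed
qed

lemma resolvent_crit_if_quartic_nonneg:
  assumes "\<forall>x. 0 \<le> quartic a0 a1 a2 a3 x"
  shows "0 \<le> 3 * b1 + 4 * b2^2" and "a3^2 / 4 \<le> resolvent_crit b1 b2"
    and "0 \<le> resolvent b0 b1 b2 (resolvent_crit b1 b2)"
proof -
  obtain x0 l where l: "a3^2 / 4 \<le> l"
    and deriv: "resolvent_deriv b1 b2 l = quartic a0 a1 a2 a3 x0"
    and res: "resolvent b0 b1 b2 l = (l - a3^2 / 4) * quartic a0 a1 a2 a3 x0"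
    by (rule obtain_resolvent_point)
  have "0 \<le> quartic a0 a1 a2 a3 x0" using assms by simp
  then have deriv_nonneg: "0 \<le> resolvent_deriv b1 b2 l" and "0 \<le> resolvent b0 b1 b2 l"
    using deriv res l by simp_all
  note crit = resolvent_le_resolvent_crit[OF deriv_nonneg]
  show "0 \<le> 3 * b1 + 4 * b2^2" by (rule crit(1))
  show "a3^2 / 4 \<le> resolvent_crit b1 b2" using crit(2) l by linarith
  show "0 \<le> resolvent b0 b1 b2 (resolvent_crit b1 b2)"
    using crit(3)[of b0] \<open>0 \<le> resolvent b0 b1 b2 l\<close> by linarith
qed

lemma resolvent_crit_if_quartic_pos:
  assumes "\<forall>x. 0 < quartic a0 a1 a2 a3 x"
  shows "0 \<le> 3 * b1 + 4 * b2^2" and "a3^2 / 4 < resolvent_crit b1 b2"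
    and "0 < resolvent b0 b1 b2 (resolvent_crit b1 b2)"
proof -
  obtain x0 l where l: "a3^2 / 4 \<le> l"
    and deriv: "resolvent_deriv b1 b2 l = quartic a0 a1 a2 a3 x0"
    and res: "resolvent b0 b1 b2 l = (l - a3^2 / 4) * quartic a0 a1 a2 a3 x0"
    by (rule obtain_resolvent_point)
  have "0 < quartic a0 a1 a2 a3 x0" using assms by simp
  then have deriv_pos: "0 < resolvent_deriv b1 b2 l" and "0 \<le> resolvent b0 b1 b2 l"
    using deriv res l by simp_all
  note crit = resolvent_less_resolvent_crit[OF deriv_pos]
  show "0 \<le> 3 * b1 + 4 * b2^2"
    by (rule resolvent_le_resolvent_crit(1)[OF less_imp_le[OF deriv_pos]])
  show "a3^2 / 4 < resolvent_crit b1 b2" using crit(1) l by linarith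
  show "0 < resolvent b0 b1 b2 (resolvent_crit b1 b2)"
    using crit(2)[of b0] \<open>0 \<le> resolvent b0 b1 b2 l\<close> by linarith
qed

end

theorem theorem2:
  fixes a0 a1 a2 a3 :: real
  defines "b0 \<equiv> (- (a1^2) + a1 * a2 * a3 - a0 * a3^2) / 4"
      and "b1 \<equiv> (4 * a0 - a2^2 - a1 * a3) / 4"
      and "b2 \<equiv> a2 / 2"
  defines "lam0 \<equiv> (4 * b2 + 2 * sqrt (3 * b1 + 4 * b2^2)) / 3"
  shows "(pos_semidef_form (quartic_form a0 a1 a2 a3) \<longleftrightarrow>
            (3 * b1 + 4 * b2^2 \<ge> 0 \<and> lam0 \<ge> a3^2 / 4 \<and>
             - (1/4) * lam0^3 + b2 * lam0^2 + b1 * lam0 + b0 \<ge> 0))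
       \<and> (pos_def_form (quartic_form a0 a1 a2 a3) \<longleftrightarrow>
            (3 * b1 + 4 * b2^2 \<ge> 0 \<and> lam0 > a3^2 / 4 \<and>
             - (1/4) * lam0^3 + b2 * lam0^2 + b1 * lam0 + b0 > 0))"
proof -
  interpret ferrari_resolvent a0 a1 a2 a3 b0 b1 b2
    by unfold_locales (simp_all add: b0_def b1_def b2_def)
  have lam0: "lam0 = resolvent_crit b1 b2"
    by (simp add: lam0_def resolvent_crit_def)
  have cubic: "- (1/4) * l^3 + b2 * l^2 + b1 * l + b0 = resolvent b0 b1 b2 l" for l
    by (simp add: resolvent_def)
  show ?thesis
    unfolding cubic lam0 pos_semidef_form_quartic_iff pos_def_form_quartic_iff
    using quartic_nonneg_if_resolvent_crit quartic_pos_if_resolvent_crit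
      resolvent_crit_if_quartic_nonneg resolvent_crit_if_quartic_pos
    by blast
qed

end
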